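(* Let $v\geq 8$ and let $C_v$ be the cyclic configuration on point set $\mathbb{Z}_v$ whose blocks are $\{m,m+1,m+3\}$ for $m\in\mathbb{Z}_v$. Then the minimum cardinality of a blocking set of $C_v$ is \[ m(v)=2\left\lfloor \frac{v}{5}\right\rfloor+\varepsilon,\quad \varepsilon=\begin{cases}0&\text{if } v\equiv 0\pmod 5,\\ 1&\text{if } v\equiv 1\pmod 5,\\ 2&\text{if } v\equiv 2,3,4\pmod 5.\end{cases}\]
   Context: A blocking set of a configuration (a set of points with a collection of 3-element blocks) is a subset $Q$ of the points such that every block contains at least one point of $Q$ and at least one point not in $Q$. *)

theory Defs
  imports Main
begin

definition blocking_set :: "'a set \<Rightarrow> 'a set set \<Rightarrow> 'a set \<Rightarrow> bool" where
  "blocking_set P B Q \<longleftrightarrow> Q \<subseteq> P \<and> (\<forall>b\<in>B. b \<inter> Q \<noteq> {} \<and> b - Q \<noteq> {})"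

definition cyc_points :: "nat \<Rightarrow> nat set" where
  "cyc_points v = {0..<v}"

definition cyc_blocks :: "nat \<Rightarrow> nat set set" where
  "cyc_blocks v = {{m, (m + 1) mod v, (m + 3) mod v} | m. m < v}"

definition m_val :: "nat \<Rightarrow> nat" where
  "m_val v = 2 * (v div 5) + (if v mod 5 = 0 then 0 else if v mod 5 = 1 then 1 else 2)"

end

theory Submission
  imports Defs
begin

text \<open>Read \<open>Q\<close> as the \<open>v\<close>-periodic 0/1 sequence \<open>f i = (i mod v \<in> Q)\<close>: it blocks \<open>C_v\<close> iff
  no window \<open>f m, f (m + 1), f (m + 3)\<close> is constant. If \<open>f\<close> alternates, \<open>|Q| = v / 2\<close>.
  Otherwise two equal neighbours, together with the window condition, rule out two consecutive
  changes anywhere, so every run has length at least 2; and no run of 0s has length 4.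
  With \<open>t\<close> runs of 1s this gives \<open>2 t \<le> |Q|\<close> and \<open>v - |Q| \<le> 3 t\<close>, whose integer consequence
  is \<open>|Q| \<ge> m(v)\<close>. The word \<open>(11000)^k\<close>, suitably patched at its end, attains the bound.\<close>

definition bichromatic :: "'a set \<Rightarrow> 'a \<Rightarrow> 'a \<Rightarrow> 'a \<Rightarrow> bool" where
  "bichromatic Q a b c \<longleftrightarrow> \<not> ((a \<in> Q \<longleftrightarrow> b \<in> Q) \<and> (b \<in> Q \<longleftrightarrow> c \<in> Q))"

lemma blocking_set_cyc_iff:
  "blocking_set (cyc_points v) (cyc_blocks v) Q \<longleftrightarrow>
     Q \<subseteq> {..<v} \<and> (\<forall>m<v. bichromatic Q m ((m + 1) mod v) ((m + 3) mod v))"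
  unfolding blocking_set_def cyc_points_def cyc_blocks_def bichromatic_def
  by (auto simp: atLeast0LessThan)

lemma cyc_blocking_setI:
  assumes "3 \<le> v" and "Q \<subseteq> {..<v}"
    and interior: "\<And>m. m + 3 < v \<Longrightarrow> bichromatic Q m (m + 1) (m + 3)"
    and "bichromatic Q (v - 3) (v - 2) 0" "bichromatic Q (v - 2) (v - 1) 1" "bichromatic Q (v - 1) 0 2"
  shows "blocking_set (cyc_points v) (cyc_blocks v) Q"
proof -
  have "bichromatic Q m ((m + 1) mod v) ((m + 3) mod v)" if "m < v" for m
  proof (cases "m + 3 < v")
    case True
    then show ?thesis using interior by simp
  next
    case False
    obtain w where w: "v = w + 3"
      using \<open>3 \<le> v\<close> le_Suc_ex by (metis add.commute)
    from False consider "m = w" | "m = w + 1" | "m = w + 2"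
      using \<open>m < v\<close> w by linarith
    then show ?thesis
      using assms(4-6) unfolding w by cases (simp_all add: mod_if)
  qed
  then show ?thesis
    using \<open>Q \<subseteq> {..<v}\<close> by (simp add: blocking_set_cyc_iff)
qed

lemma sum_lessThan_shift_periodic:
  fixes g :: "nat \<Rightarrow> 'a::cancel_comm_monoid_add"
  assumes per: "\<And>i. g (i + v) = g i"
  shows "(\<Sum>i<v. g (i + c)) = (\<Sum>i<v. g i)"
proof (induction c)
  case (Suc c)
  have "(\<Sum>i<Suc v. g (i + c)) = g c + (\<Sum>i<v. g (i + Suc c))"
    by (subst sum.lessThan_Suc_shift) simp
  moreover have "(\<Sum>i<Suc v. g (i + c)) = (\<Sum>i<v. g (i + c)) + g c"
    using per[of c] by (simp add: add.commute)
  ultimately show ?case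
    using Suc by (simp add: add.commute)
qed simp

context
  fixes f :: "nat \<Rightarrow> bool" and v :: nat
  assumes periodic: "\<And>i. f (i + v) = f i"
    and no_constant_window: "\<And>m. \<not> (f m = f (m + 1) \<and> f (m + 1) = f (m + 3))"
begin

lemma periodic_mult: "f (i + v * n) = f i"
proof (induction n)
  case (Suc n)
  then show ?case
    using periodic[of "i + v * n"] by (simp add: ac_simps)
qed simp

lemma periodic_Suc: "f (Suc (i + v)) = f (Suc i)"
  using periodic[of "Suc i"] by simp

lemma repeat_propagates:
  assumes "f p = f (p + 1)"
  shows "f (p + c) = f (p + c + 1) \<or> f (p + c + 1) = f (p + c + 2)"
proof (induction c)
  case (Suc c)
  then show ?case
    using no_constant_window[of "p + c"] by (auto simp: numeral_3_eq_3 numeral_2_eq_2)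
qed (use assms in simp)

lemma repeat_after_change:
  assumes "0 < v" and "f p = f (p + 1)" and "f j \<noteq> f (j + 1)"
  shows "f (j + 1) = f (j + 2)"
proof -
  have "p \<le> j + v * p"
    using \<open>0 < v\<close> by (simp add: trans_le_add2)
  then obtain c where "j + v * p = p + c"
    using le_Suc_ex by blast
  then have "f (j + v * p + 1) = f (j + v * p + 2)"
    using repeat_propagates[OF \<open>f p = f (p + 1)\<close>, of c] assms(3)
      periodic_mult[of j p] periodic_mult[of "j + 1" p]
    by (auto simp: ac_simps)
  then show ?thesis
    using periodic_mult[of "j + 1" p] periodic_mult[of "j + 2" p]
    by (simp add: ac_simps)
qed

lemma card_alternating_or_runs:
  assumes "0 < v"
  defines "q \<equiv> card {i. i < v \<and> f i}"
  shows "2 * q = v \<or> (\<exists>t. 2 * t \<le> q \<and> v \<le> q + 3 * t)"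
proof -
  define F :: "nat \<Rightarrow> nat" where "F i = of_bool (f i)" for i
  define rise :: "nat \<Rightarrow> nat" where "rise i = of_bool (\<not> f i \<and> f (i + 1))" for i
  define fall :: "nat \<Rightarrow> nat" where "fall i = of_bool (f i \<and> \<not> f (i + 1))" for i
  define t where "t = (\<Sum>i<v. rise i)"
  have F_sum: "(\<Sum>i<v. F (i + c)) = q" for c
  proof -
    have "(\<Sum>i<v. F (i + c)) = (\<Sum>i<v. F i)"
      by (rule sum_lessThan_shift_periodic) (simp add: F_def periodic)
    also have "\<dots> = q"
      by (simp add: F_def q_def lessThan_def Collect_conj_eq)
    finally show ?thesis .
  qed
  have rise_sum: "(\<Sum>i<v. rise (i + c)) = t" for c
    unfolding t_def
    by (rule sum_lessThan_shift_periodic) (simp add: rise_def periodic periodic_Suc)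
  have fall_sum: "(\<Sum>i<v. fall (i + c)) = t" for c
  proof -
    have "(\<Sum>i<v. F (i + 1) + fall i) = (\<Sum>i<v. F i + rise i)"
      by (rule sum.cong) (auto simp: F_def fall_def rise_def)
    then have "(\<Sum>i<v. fall i) = t"
      using F_sum[of 0] F_sum[of 1] by (simp add: sum.distrib t_def)
    moreover have "(\<Sum>i<v. fall (i + c)) = (\<Sum>i<v. fall i)"
      by (rule sum_lessThan_shift_periodic) (simp add: fall_def periodic periodic_Suc)
    ultimately show ?thesis by simp
  qed
  show ?thesis
  proof (cases "\<exists>p. f p = f (p + 1)")
    case False
    then have alternating: "f (Suc i) \<longleftrightarrow> \<not> f i" for i
      by (metis Suc_eq_plus1)
    have "(\<Sum>i<v. F (i + 1) + F i) = (\<Sum>i<v. 1)"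
      by (intro sum.cong) (simp_all add: F_def alternating)
    then have "2 * q = v"
      using F_sum[of 1] F_sum[of 0] by (simp add: sum.distrib)
    then show ?thesis ..
  next
    case True
    then obtain p where p: "f p = f (p + 1)" ..
    txt \<open>A rise at \<open>i\<close> forces \<open>f (i + 2)\<close>, and rises at \<open>i\<close> and \<open>i + 1\<close> exclude each other.\<close>
    have "(\<Sum>i<v. rise (i + 1) + rise i) \<le> (\<Sum>i<v. F (i + 2))"
      by (rule sum_mono) (use repeat_after_change[OF \<open>0 < v\<close> p] in \<open>auto simp: F_def rise_def\<close>)
    then have "2 * t \<le> q"
      using rise_sum[of 1] rise_sum[of 0] F_sum[of 2] by (simp add: sum.distrib)
    moreover
    txt \<open>A 0 at \<open>i + 3\<close> with no fall in between would make \<open>f i, \<dots>, f (i + 3)\<close> all 0.\<close>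
    have "(\<Sum>i<v. 1) \<le> (\<Sum>i<v. F (i + 3) + fall (i + 2) + fall (i + 1) + fall i)"
      by (rule sum_mono) (use no_constant_window in \<open>auto simp: F_def fall_def numeral_3_eq_3 numeral_2_eq_2\<close>)
    then have "v \<le> q + 3 * t"
      using fall_sum[of 2] fall_sum[of 1] fall_sum[of 0] F_sum[of 3] by (simp add: sum.distrib)
    ultimately show ?thesis by blast
  qed
qed

end

lemma m_val_div_mod:
  obtains k r where "v = 5 * k + r" "r < 5"
    "m_val v = 2 * k + (if r = 0 then 0 else if r = 1 then 1 else 2)"
  using that unfolding m_val_def
  by (metis div_mult_mod_eq mod_less_divisor mult.commute zero_less_numeral)

lemma m_val_le_half:
  assumes "3 \<le> v" and "2 * q = v"
  shows "m_val v \<le> q"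
proof (rule m_val_div_mod[of v])
  fix k r
  assume "v = 5 * k + r" "r < 5"
    "m_val v = 2 * k + (if r = 0 then 0 else if r = 1 then 1 else 2)"
  with assms show ?thesis
    by presburger
qed

lemma m_val_le_runs:
  assumes "2 * t \<le> q" and "v \<le> q + 3 * t"
  shows "m_val v \<le> q"
proof (rule m_val_div_mod[of v])
  fix k r
  assume "v = 5 * k + r" "r < 5"
    "m_val v = 2 * k + (if r = 0 then 0 else if r = 1 then 1 else 2)"
  with assms show ?thesis
    by presburger
qed

lemma m_val_le_card_blocking_set:
  assumes "8 \<le> v" and "blocking_set (cyc_points v) (cyc_blocks v) Q"
  shows "m_val v \<le> card Q"
proof -
  from assms(2) have sub: "Q \<subseteq> {..<v}"
    and bichr: "\<And>m. m < v \<Longrightarrow> bichromatic Q m ((m + 1) mod v) ((m + 3) mod v)"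
    by (simp_all add: blocking_set_cyc_iff)
  define f where "f i \<longleftrightarrow> i mod v \<in> Q" for i
  have periodic: "f (i + v) = f i" for i
    by (simp add: f_def)
  have window: "\<not> (f m = f (m + 1) \<and> f (m + 1) = f (m + 3))" for m
  proof -
    have "(m mod v + 1) mod v = (m + 1) mod v" "(m mod v + 3) mod v = (m + 3) mod v"
      by (simp_all add: mod_simps)
    then show ?thesis
      using bichr[of "m mod v"] \<open>8 \<le> v\<close> by (simp add: f_def bichromatic_def)
  qed
  have "{i. i < v \<and> f i} = Q"
    using sub by (auto simp: f_def)
  moreover have "0 < v"
    using assms(1) by simp
  ultimately have "2 * card Q = v \<or> (\<exists>t. 2 * t \<le> card Q \<and> v \<le> card Q + 3 * t)"
    using card_alternating_or_runs[of f v, OF periodic window] by simp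
  then show ?thesis
  proof
    assume "2 * card Q = v"
    with assms(1) show ?thesis
      by (intro m_val_le_half) simp_all
  qed (use m_val_le_runs in blast)
qed

definition pattern_11000 :: "nat \<Rightarrow> nat set" where
  "pattern_11000 k = {i. i < 5 * k \<and> i mod 5 < 2}"

text \<open>For \<open>v = 5 k + r\<close> the witness, read as a 0/1 word, is \<open>(11000)^k\<close>, \<open>(11000)^k 1\<close>,
  \<open>(11000)^(k-1) 11100 01\<close>, \<open>(11000)^(k-1) 11001 100\<close> or \<open>(11000)^k 1100\<close> for \<open>r = 0, ..., 4\<close>.\<close>

definition pattern_tail :: "nat \<Rightarrow> nat \<Rightarrow> nat set" where
  "pattern_tail k r =
     (if r = 0 then {} else if r = 1 then {5 * k} else if r = 2 then {5 * k - 3, 5 * k + 1}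
      else if r = 3 then {5 * k - 1, 5 * k} else {5 * k, 5 * k + 1})"

definition min_blocking_set :: "nat \<Rightarrow> nat set" where
  "min_blocking_set v = pattern_11000 (v div 5) \<union> pattern_tail (v div 5) (v mod 5)"

lemma nat_mod5_cases:
  fixes m :: nat
  obtains a where "m = 5 * a" | a where "m = 5 * a + 1" | a where "m = 5 * a + 2"
    | a where "m = 5 * a + 3" | a where "m = 5 * a + 4"
proof -
  have m: "m = 5 * (m div 5) + m mod 5"
    by simp
  have "m mod 5 < 5"
    by simp
  then consider "m mod 5 = 0" | "m mod 5 = 1" | "m mod 5 = 2" | "m mod 5 = 3" | "m mod 5 = 4"
    by linarith
  then show ?thesis
    by cases (metis that m add.right_neutral)+
qed

lemma pattern_interior_bichromatic:
  assumes "r < 5" and "m + 3 < 5 * k + r"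
  shows "bichromatic (pattern_11000 k \<union> pattern_tail k r) m (m + 1) (m + 3)"
proof -
  consider "r = 0" | "r = 1" | "r = 2" | "r = 3" | "r = 4"
    using \<open>r < 5\<close> by linarith
  then show ?thesis
    using assms(2)
    by cases (cases rule: nat_mod5_cases[of m];
        simp add: bichromatic_def pattern_11000_def pattern_tail_def; arith)+
qed

lemma pattern_wrap_bichromatic:
  assumes "r < 5" and "8 \<le> 5 * k + r"
  defines "v \<equiv> 5 * k + r" and "Q \<equiv> pattern_11000 k \<union> pattern_tail k r"
  shows "bichromatic Q (v - 3) (v - 2) 0 \<and> bichromatic Q (v - 2) (v - 1) 1 \<and> bichromatic Q (v - 1) 0 2"
proof -
  define j where "j = k - 1"
  have k: "k = j + 1" and j: "r \<le> 2 \<Longrightarrow> 1 \<le> j"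
    using assms(1,2) unfolding j_def by simp_all
  consider "r = 0" | "r = 1" | "r = 2" | "r = 3" | "r = 4"
    using \<open>r < 5\<close> by linarith
  then show ?thesis
    unfolding v_def Q_def k using j
    by cases (simp_all add: bichromatic_def pattern_11000_def pattern_tail_def)
qed

lemma card_pattern_11000: "card (pattern_11000 k) = 2 * k"
proof (induction k)
  case (Suc k)
  have "pattern_11000 (Suc k) = insert (5 * k) (insert (5 * k + 1) (pattern_11000 k))"
    unfolding pattern_11000_def by (auto; presburger)
  moreover have "5 * k \<notin> pattern_11000 k" "5 * k + 1 \<notin> pattern_11000 k"
    "finite (pattern_11000 k)"
    by (auto simp: pattern_11000_def)
  ultimately show ?case
    using Suc by simp
qed (simp add: pattern_11000_def)

lemma card_min_blocking_set:
  assumes "5 \<le> v"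
  shows "card (min_blocking_set v) = m_val v"
proof (rule m_val_div_mod[of v])
  fix k r
  assume v: "v = 5 * k + r" and "r < 5"
    and m: "m_val v = 2 * k + (if r = 0 then 0 else if r = 1 then 1 else 2)"
  define j where "j = k - 1"
  have k: "k = j + 1"
    using assms v \<open>r < 5\<close> unfolding j_def by simp
  consider "r = 0" | "r = 1" | "r = 2" | "r = 3" | "r = 4"
    using \<open>r < 5\<close> by linarith
  then have "pattern_11000 k \<inter> pattern_tail k r = {}" "finite (pattern_tail k r)"
    "card (pattern_tail k r) + 2 * k = m_val v"
    unfolding m k by (cases; simp add: pattern_11000_def pattern_tail_def mod_Suc)+
  moreover have "finite (pattern_11000 k)"
    by (simp add: pattern_11000_def)
  moreover have "min_blocking_set v = pattern_11000 k \<union> pattern_tail k r"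
    using \<open>r < 5\<close> by (simp add: min_blocking_set_def v)
  ultimately show ?thesis
    by (simp add: card_Un_disjoint card_pattern_11000)
qed

lemma min_blocking_set_blocking:
  assumes "8 \<le> v"
  shows "blocking_set (cyc_points v) (cyc_blocks v) (min_blocking_set v)"
proof -
  define k where "k = v div 5"
  define r where "r = v mod 5"
  have v: "v = 5 * k + r" and "r < 5"
    by (simp_all add: k_def r_def)
  have Q: "min_blocking_set v = pattern_11000 k \<union> pattern_tail k r"
    by (simp add: min_blocking_set_def k_def r_def)
  show ?thesis
    unfolding Q
  proof (rule cyc_blocking_setI)
    show "pattern_11000 k \<union> pattern_tail k r \<subseteq> {..<v}"
      using \<open>r < 5\<close> unfolding v
      by (auto simp: pattern_11000_def pattern_tail_def split: if_splits)
  qed (use assms \<open>r < 5\<close> pattern_interior_bichromatic pattern_wrap_bichromatic[of r k] in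
      \<open>simp_all add: v\<close>)
qed

theorem mainTheorem4:
  fixes v :: nat
  assumes "v \<ge> 8"
  shows "(\<exists>Q. blocking_set (cyc_points v) (cyc_blocks v) Q \<and> card Q = m_val v)
       \<and> (\<forall>Q. blocking_set (cyc_points v) (cyc_blocks v) Q \<longrightarrow> m_val v \<le> card Q)"
  using min_blocking_set_blocking[OF assms] card_min_blocking_set[of v] assms
    m_val_le_card_blocking_set[OF assms]
  by auto

end
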